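(* Let $f_0(x)=x^4+12x^3+14x^2-12x+1$ and $f_{1728}(x)=x^4+18x^3+74x^2-18x+1$, and let $l$ be a prime. (a) If $l\equiv 4\pmod 5$ and $\left(\frac{-3}{l}\right)=-1$, then $f_0(x)$ splits into distinct linear factors modulo $l$. (b) If $l\equiv 4\pmod 5$ and $\left(\frac{-4}{l}\right)=-1$, then $f_{1728}(x)$ splits into distinct linear factors modulo $l$. (c) If $l\equiv 1\pmod 5$ and $\left(\frac{-3}{l}\right)=-1$, then $f_0(x)$ factors modulo $l$ as a product of two irreducible quadratics of the form $x^2+ax-1$. (d) If $l\equiv 1\pmod 5$ and $\left(\frac{-4}{l}\right)=-1$, then $f_{1728}(x)$ factors modulo $l$ as a product of two irreducible quadratics of the form $x^2+ax-1$.
   Context: $\left(\frac{\cdot}{l}\right)$ denotes the Kronecker/Legendre symbol. *)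

theory Defs
  imports "Berlekamp_Zassenhaus.Finite_Field" "HOL-Number_Theory.Number_Theory"
begin

definition f0 :: "int poly" where
  "f0 = [:1, -12, 14, 12, 1:]"

definition f1728 :: "int poly" where
  "f1728 = [:1, -18, 74, 18, 1:]"

definition red :: "int poly \<Rightarrow> 'p::prime_card mod_ring poly" where
  "red f = map_poly of_int f"

end

theory Submission
  imports Defs "Berlekamp_Zassenhaus.Berlekamp_Type_Based" "HOL-Computational_Algebra.Nth_Powers"
begin

text \<open>
  Let \<open>c\<close> be a root of \<open>c^2 + c = 1\<close> in \<open>F_l\<close> (a "golden" number: over the reals,
  \<open>c = (sqrt 5 - 1) / 2\<close>). It exists because \<open>5\<close> is a square modulo \<open>l\<close> by quadratic
  reciprocity, and \<open>c' = -1 - c\<close> is the other root. Then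
  \<open>f0 = (x^2 + 4(2+c)x - 1)(x^2 + 4(2+c')x - 1)\<close> and
  \<open>f1728 = (x^2 + 2(5+c)x - 1)(x^2 + 2(5+c')x - 1)\<close>, and up to nonzero squares the
  discriminants of these quadratic factors are \<open>-3(c^2 - 4)\<close> and \<open>-4(c^2 - 4)\<close>.
  Now \<open>c^2 - 4\<close> is the discriminant of \<open>z^2 - c z + 1\<close>, whose roots are exactly the
  primitive fifth roots of unity (\<open>c = z + z^4\<close> is a Gaussian period), so it is a square
  in \<open>F_l\<close> iff \<open>l = 1 (mod 5)\<close>. Since \<open>-3\<close> (resp. \<open>-4\<close>) is a nonsquare, the discriminants
  are squares, and the quadratic factors split into distinct linear factors, iff
  \<open>l = 4 (mod 5)\<close>; otherwise both factors are irreducible.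
\<close>

lemma monic_quadratic_completing_square:
  fixes d e r :: "'a::comm_ring_1"
  shows "(2*r + d)^2 - (d^2 - 4*e) = 2 * (2 * poly [:e, d, 1:] r)"
  by (simp add: algebra_simps power2_eq_square)

lemma poly_monic_quadratic_root:
  fixes d e y :: "'a::field"
  assumes two: "(2::'a) \<noteq> 0" and y: "y^2 = d^2 - 4*e"
  shows "poly [:e, d, 1:] ((y - d) / 2) = 0"
proof -
  have "2 * (2 * poly [:e, d, 1:] ((y - d) / 2)) = (2 * ((y - d) / 2) + d)^2 - (d^2 - 4*e)"
    by (rule monic_quadratic_completing_square[symmetric])
  also have "\<dots> = 0"
  proof -
    have "2 * ((y - d) / 2) = y - d" using two by simp
    then have r: "2 * ((y - d) / 2) + d = y" by (metis diff_add_cancel)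
    show ?thesis unfolding r y by simp
  qed
  finally show ?thesis using two by (metis mult_eq_0_iff)
qed

lemma irreducible_monic_quadratic:
  fixes d e :: "'a::field"
  assumes "\<not> is_square (d^2 - 4*e)"
  shows "irreducible [:e, d, 1:]"
proof (rule irreducibleI)
  show "[:e, d, 1:] \<noteq> 0" by simp
  show "\<not> is_unit [:e, d, 1:]" by (simp add: is_unit_iff_degree)
next
  fix p q assume pq: "[:e, d, 1:] = p * q"
  then have p0: "p \<noteq> 0" and q0: "q \<noteq> 0" by auto
  have "degree p + degree q = degree [:e, d, 1:]" using pq p0 q0 by (simp add: degree_mult_eq)
  then have deg: "degree p + degree q = 2" by simp
  show "is_unit p \<or> is_unit q"
  proof (rule ccontr)
    assume "\<not> (is_unit p \<or> is_unit q)"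
    then have "degree p = 1" using deg p0 q0 by (auto simp: is_unit_iff_degree)
    then obtain u v where p: "p = [:u, v:]" and "v \<noteq> 0" by (rule degree1_coeffs)
    then have "poly p (- u / v) = 0" by simp
    then have "poly [:e, d, 1:] (- u / v) = 0" using pq by simp
    then have "(2 * (- u / v) + d)^2 = d^2 - 4*e"
      using monic_quadratic_completing_square[of "- u / v" d e] by simp
    with assms show False by (metis is_nth_powerI)
  qed
qed

lemma monic_quadratic_splits:
  fixes d e y :: "'a::field"
  assumes two: "(2::'a) \<noteq> 0" and y: "y^2 = d^2 - 4*e" "y \<noteq> 0"
  obtains R where "card R = 2" "[:e, d, 1:] = (\<Prod>r\<in>R. [:-r, 1:])"
proof -
  define r1 where "r1 = (y - d) / 2"
  define r2 where "r2 = - d - r1"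
  have "2 * r1 = y - d" using two by (simp add: r1_def)
  then have r1: "2 * r1 + d = y" by simp
  have "poly [:e, d, 1:] r1 = 0" unfolding r1_def by (rule poly_monic_quadratic_root[OF two y(1)])
  moreover have "r1 * r2 = e - poly [:e, d, 1:] r1" by (simp add: r2_def algebra_simps)
  ultimately have "r1 * r2 = e" by simp
  have "[:-r1, 1:] * [:-r2, 1:] = [:r1 * r2, -(r1 + r2), 1:]" by (simp add: algebra_simps)
  also have "\<dots> = [:e, d, 1:]" using \<open>r1 * r2 = e\<close> by (simp add: r2_def)
  finally have prod: "[:e, d, 1:] = [:-r1, 1:] * [:-r2, 1:]" ..
  have "r1 - r2 = 2 * r1 + d" unfolding r2_def by (simp add: algebra_simps eval_nat_numeral)
  with r1 y(2) have "r1 \<noteq> r2" by auto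
  with prod show ?thesis using that[of "{r1, r2}"] by simp
qed

lemma poly_prod_linear_factors_eq_0_iff:
  fixes R :: "'a::idom set"
  assumes "finite R"
  shows "poly (\<Prod>r\<in>R. [:-r, 1:]) x = 0 \<longleftrightarrow> x \<in> R"
  using assms by (auto simp: poly_prod prod_zero_iff)

lemma prod_quadratics_splits:
  fixes a b :: "'a::field"
  assumes two: "(2::'a) \<noteq> 0" and "a \<noteq> b"
    and "is_square (a^2 + 4)" "a^2 + 4 \<noteq> 0" "is_square (b^2 + 4)" "b^2 + 4 \<noteq> 0"
  shows "\<exists>R. card R = 4 \<and> [:-1, a, 1:] * [:-1, b, 1:] = (\<Prod>r\<in>R. [:-r, 1:])"
proof -
  have "\<exists>R. card R = 2 \<and> [:-1, x, 1:] = (\<Prod>r\<in>R. [:-r, 1:])"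
    if sq: "is_square (x^2 + 4)" and nz: "x^2 + 4 \<noteq> 0" for x :: 'a
  proof -
    obtain y where "x^2 + 4 = y^2" using sq by (elim is_nth_powerE)
    with nz have "y^2 = x^2 - 4 * (-1)" "y \<noteq> 0" by auto
    then obtain R where "card R = 2" "[:-1, x, 1:] = (\<Prod>r\<in>R. [:-r, 1:])"
      by (rule monic_quadratic_splits[OF two])
    then show ?thesis by blast
  qed
  then obtain A B where A: "card A = 2" "[:-1, a, 1:] = (\<Prod>r\<in>A. [:-r, 1:])"
    and B: "card B = 2" "[:-1, b, 1:] = (\<Prod>r\<in>B. [:-r, 1:])"
    using assms by meson
  have fin: "finite A" "finite B" using A(1) B(1) by (simp_all add: card_ge_0_finite)
  have "A \<inter> B = {}"
  proof (rule ccontr)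
    assume "A \<inter> B \<noteq> {}"
    then obtain r where "r \<in> A" "r \<in> B" by blast
    then have "poly [:-1, a, 1:] r = 0" "poly [:-1, b, 1:] r = 0"
      using poly_prod_linear_factors_eq_0_iff fin A(2) B(2) by metis+
    moreover have "r * (a - b) = poly [:-1, a, 1:] r - poly [:-1, b, 1:] r"
      by (simp add: algebra_simps)
    ultimately have "r * (a - b) = 0" by (simp only: diff_self)
    with \<open>a \<noteq> b\<close> have "r = 0" by simp
    with \<open>poly [:-1, a, 1:] r = 0\<close> show False by simp
  qed
  then have "card (A \<union> B) = 4" "[:-1, a, 1:] * [:-1, b, 1:] = (\<Prod>r\<in>A \<union> B. [:-r, 1:])"
    using A B fin by (simp_all add: card_Un_disjoint prod.union_disjoint)
  then show ?thesis by blast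
qed

lemma prod_quadratics_coeffs:
  fixes a b :: "'a::comm_ring_1"
  shows "[:-1, a, 1:] * [:-1, b, 1:] = [:1, -(a + b), a*b - 2, a + b, 1:]"
  by (simp add: algebra_simps)

lemma cyclotomic5_iff:
  fixes z :: "'a::idom"
  assumes "(5::'a) \<noteq> 0"
  shows "z^4 + z^3 + z^2 + z + 1 = 0 \<longleftrightarrow> z^5 = 1 \<and> z \<noteq> 1"
proof -
  have factor: "z^5 - 1 = (z - 1) * (z^4 + z^3 + z^2 + z + 1)"
    by (simp add: algebra_simps eval_nat_numeral)
  show ?thesis
  proof
    assume "z^4 + z^3 + z^2 + z + 1 = 0"
    with factor assms show "z^5 = 1 \<and> z \<noteq> 1" by auto
  next
    assume "z^5 = 1 \<and> z \<noteq> 1"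
    with factor show "z^4 + z^3 + z^2 + z + 1 = 0" by simp
  qed
qed

text \<open>Rewrite rules reducing polynomials in \<open>c\<close> modulo \<open>c^2 + c - 1\<close>, for use with
  \<open>algebra_simps\<close>.\<close>

lemma golden_reduce:
  fixes c t :: "'a::comm_ring_1"
  assumes "c^2 + c = 1"
  shows "c * c = 1 - c" "c * (c * t) = t - c * t"
proof -
  show cc: "c * c = 1 - c" using assms by (simp add: power2_eq_square eq_diff_eq)
  show "c * (c * t) = t - c * t" by (simp add: cc algebra_simps flip: mult.assoc)
qed

lemma golden_identities:
  fixes c :: "'a::comm_ring_1"
  assumes "c^2 + c = 1"
  shows "(2*c + 1)^2 = 5" "(c^2 - 4) * (c - 2) = 5" "(c + 2) * (c - 1) = -1"
    and "(c^2 - 4) * ((-1 - c)^2 - 4) = (2*c + 1)^2"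
  by (simp_all add: algebra_simps power2_eq_square golden_reduce[OF assms])

lemma golden_roots_cases:
  fixes c d :: "'a::idom"
  assumes "c^2 + c = 1" "d^2 + d = 1"
  shows "c = d \<or> c = -1 - d"
proof -
  have "(c - d) * (c - (-1 - d)) = (c^2 + c) - (d^2 + d)" by (simp add: algebra_simps power2_eq_square)
  then show ?thesis using assms by simp
qed

lemma golden_of_cyclotomic5:
  fixes z :: "'a::comm_ring_1"
  assumes "z^4 + z^3 + z^2 + z + 1 = 0"
  shows "(z + z^4)^2 + (z + z^4) = 1" "(z + z^4)^2 - 4 = (z - z^4)^2"
proof -
  have "z^5 - 1 = (z - 1) * (z^4 + z^3 + z^2 + z + 1)" by (simp add: algebra_simps eval_nat_numeral)
  then have z5: "z^5 = 1" using assms by simp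
  have "(z + z^4)^2 + (z + z^4) = (z^4 + z^3 + z^2 + z + 1) + 1 + (2 + z^3) * (z^5 - 1)"
    by (simp add: algebra_simps eval_nat_numeral)
  then show "(z + z^4)^2 + (z + z^4) = 1" using assms z5 by simp
  have "(z + z^4)^2 - 4 = (z - z^4)^2 + 4 * (z^5 - 1)" by (simp add: algebra_simps eval_nat_numeral)
  then show "(z + z^4)^2 - 4 = (z - z^4)^2" using z5 by simp
qed

lemma cyclotomic5_of_golden:
  fixes c z :: "'a::comm_ring_1"
  assumes "c^2 + c = 1" "z^2 + 1 = c * z"
  shows "z^4 + z^3 + z^2 + z + 1 = 0"
proof -
  have "z^4 + z^3 + z^2 + z + 1 = (z^2 + 1)^2 + z * (z^2 + 1) - z^2"
    by (simp add: algebra_simps eval_nat_numeral)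
  also have "\<dots> = z^2 * (c^2 + c - 1)"
    unfolding assms(2) by (simp add: algebra_simps power2_eq_square)
  also have "\<dots> = 0" using assms(1) by simp
  finally show ?thesis .
qed

lemma cyclotomic5_root_of_golden_disc_square:
  fixes c :: "'a::field"
  assumes two: "(2::'a) \<noteq> 0" and c: "c^2 + c = 1" and "is_square (c^2 - 4)"
  obtains z :: 'a where "z^4 + z^3 + z^2 + z + 1 = 0"
proof -
  obtain y where y: "y^2 = (-c)^2 - 4 * 1" using assms(3) by (auto elim: is_nth_powerE)
  define z where "z = (y - (-c)) / 2"
  have "poly [:1, -c, 1:] z = 0" unfolding z_def using two y by (rule poly_monic_quadratic_root)
  moreover have "z^2 + 1 - c * z = poly [:1, -c, 1:] z" by (simp add: algebra_simps power2_eq_square)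
  ultimately have "z^2 + 1 = c * z" by simp
  then have "z^4 + z^3 + z^2 + z + 1 = 0" by (rule cyclotomic5_of_golden[OF c])
  then show ?thesis by (rule that)
qed

lemma of_int_mod_ring_eq_iff_cong:
  "(of_int x :: 'a::nontriv mod_ring) = of_int y \<longleftrightarrow> [x = y] (mod int CARD('a))"
  unfolding of_int_of_int_mod_ring cong_def by transfer simp

lemma is_square_of_int_mod_ring_iff:
  "is_square (of_int a :: 'a::nontriv mod_ring) \<longleftrightarrow> QuadRes (int CARD('a)) a"
proof
  assume "is_square (of_int a :: 'a mod_ring)"
  then obtain y :: "'a mod_ring" where y: "of_int a = y^2" by (elim is_nth_powerE)
  have "y = of_int (to_int_mod_ring y)" unfolding of_int_of_int_mod_ring by simp
  then have "(of_int ((to_int_mod_ring y)^2) :: 'a mod_ring) = of_int a" using y by (metis of_int_power)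
  then show "QuadRes (int CARD('a)) a" unfolding QuadRes_def using of_int_mod_ring_eq_iff_cong by blast
next
  assume "QuadRes (int CARD('a)) a"
  then obtain k where "[k^2 = a] (mod int CARD('a))" unfolding QuadRes_def by blast
  then have "(of_int a :: 'a mod_ring) = (of_int k)^2" using of_int_mod_ring_eq_iff_cong by (metis of_int_power)
  then show "is_square (of_int a :: 'a mod_ring)" by (rule is_nth_powerI)
qed

lemma not_square_of_Legendre_eq_minus_one:
  assumes "Legendre a (int CARD('a::prime_card)) = -1"
  shows "\<not> is_square (of_int a :: 'a mod_ring)"
  using assms is_square_of_int_mod_ring_iff[of a, where 'a='a]
  unfolding Legendre_def by (auto split: if_splits)

lemma mod_ring_prime_neq_0:
  assumes "prime p" "p \<noteq> CARD('a::prime_card)"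
  shows "(of_nat p :: 'a mod_ring) \<noteq> 0"
  using assms of_nat_0_mod_ring_dvd primes_dvd_imp_eq prime_card by blast

lemma card_gt_2_of_mod5:
  assumes "CARD('a::prime_card) mod 5 \<in> {1, 4}"
  shows "2 < CARD('a)"
  using assms prime_ge_2_nat[OF prime_card[where 'a='a]] by (cases "CARD('a) = 2") auto

lemma mod_ring_small_numerals_neq_0:
  assumes "CARD('a::prime_card) mod 5 \<in> {1, 4}"
  shows "(2::'a mod_ring) \<noteq> 0" "(3::'a mod_ring) \<noteq> 0" "(4::'a mod_ring) \<noteq> 0"
    "(5::'a mod_ring) \<noteq> 0" "(6::'a mod_ring) \<noteq> 0"
proof -
  have "(of_nat p :: 'a mod_ring) \<noteq> 0" if "prime p" "p mod 5 \<notin> {1, 4}" for p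
    using mod_ring_prime_neq_0[OF that(1)] that(2) assms by auto
  from this[of 2] this[of 3] this[of 5]
  show two: "(2::'a mod_ring) \<noteq> 0" and three: "(3::'a mod_ring) \<noteq> 0"
    and "(5::'a mod_ring) \<noteq> 0" by simp_all
  have "(4::'a mod_ring) = 2 * 2" "(6::'a mod_ring) = 2 * 3" by simp_all
  with two three show "(4::'a mod_ring) \<noteq> 0" "(6::'a mod_ring) \<noteq> 0" by (metis mult_eq_0_iff)+
qed

lemma euler_criterion_mod_ring:
  fixes x :: "'a::prime_card mod_ring"
  assumes "2 < CARD('a)" "x \<noteq> 0"
  shows "x ^ ((CARD('a) - 1) div 2) = (if is_square x then 1 else -1)"
proof -
  define a where "a = to_int_mod_ring x"
  have xa: "x = of_int a" unfolding a_def of_int_of_int_mod_ring by simp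
  have "[Legendre a (int CARD('a)) = a ^ ((CARD('a) - 1) div 2)] (mod int CARD('a))"
    using euler_criterion[OF prime_card assms(1)] by simp
  then have "(of_int (Legendre a (int CARD('a))) :: 'a mod_ring) = of_int (a ^ ((CARD('a) - 1) div 2))"
    using of_int_mod_ring_eq_iff_cong by blast
  then have "(of_int (Legendre a (int CARD('a))) :: 'a mod_ring) = x ^ ((CARD('a) - 1) div 2)"
    using xa by simp
  moreover have "\<not> [a = 0] (mod int CARD('a))"
    using assms(2) xa of_int_mod_ring_eq_iff_cong[of a 0, where 'a='a] by simp
  ultimately show ?thesis
    using is_square_of_int_mod_ring_iff[of a, where 'a='a] xa
    unfolding Legendre_def by (auto split: if_splits)
qed

lemma is_square_mult_iff_mod_ring:
  fixes x y :: "'a::prime_card mod_ring"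
  assumes "2 < CARD('a)" "x \<noteq> 0" "y \<noteq> 0"
  shows "is_square (x * y) \<longleftrightarrow> (is_square x \<longleftrightarrow> is_square y)"
proof -
  have "(2::'a mod_ring) \<noteq> 0" using mod_ring_prime_neq_0[of 2, where 'a='a] assms(1) by simp
  then have "(-1::'a mod_ring) \<noteq> 1" by (metis one_add_one add.right_inverse)
  moreover have "(x * y) ^ ((CARD('a) - 1) div 2) = x ^ ((CARD('a) - 1) div 2) * y ^ ((CARD('a) - 1) div 2)"
    by (rule power_mult_distrib)
  ultimately show ?thesis
    using euler_criterion_mod_ring[OF assms(1)] assms(2,3) by (auto split: if_splits)
qed

lemma is_square_5_mod_ring:
  assumes "CARD('a::prime_card) mod 5 \<in> {1, 4}"
  shows "is_square (5 :: 'a mod_ring)"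
proof -
  let ?l = "CARD('a)"
  have l2: "2 < ?l" using card_gt_2_of_mod5[OF assms] .
  have l5: "?l \<noteq> 5" using assms by auto
  have "?l mod 5 = 1 \<or> ?l mod 5 = 4" using assms by simp
  then have lm: "int ?l mod 5 = 1 \<or> int ?l mod 5 = 4" by (metis of_nat_mod of_nat_1 of_nat_numeral)
  have "\<not> [int ?l = 0] (mod 5)" using lm by (auto simp: cong_def)
  moreover have "QuadRes 5 (int ?l)"
    unfolding QuadRes_def cong_def using lm by (auto intro: exI[of _ 1] exI[of _ 2])
  ultimately have L1: "Legendre (int ?l) 5 = 1" unfolding Legendre_def by simp
  have "Legendre (int 5) (int ?l) * Legendre (int ?l) (int 5)
      = (-1::int) ^ ((5 - 1) div 2 * ((?l - 1) div 2))"
    by (rule Quadratic_Reciprocity) (use l2 l5 prime_card[where 'a='a] in auto)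
  then have "Legendre 5 (int ?l) = 1" using L1 by (simp add: power_mult)
  then have "QuadRes (int ?l) 5" unfolding Legendre_def by (auto split: if_splits)
  then show ?thesis using is_square_of_int_mod_ring_iff[of 5, where 'a='a] by simp
qed

lemma exists_golden_mod_ring:
  assumes "CARD('a::prime_card) mod 5 \<in> {1, 4}"
  obtains c :: "'a::prime_card mod_ring" where "c^2 + c = 1"
proof -
  obtain s :: "'a mod_ring" where s: "5 = s^2"
    using is_square_5_mod_ring[OF assms] by (elim is_nth_powerE)
  have two: "(2::'a mod_ring) \<noteq> 0" and four: "(4::'a mod_ring) \<noteq> 0"
    using mod_ring_small_numerals_neq_0[OF assms] by simp_all
  define c where "c = (s - 1) / 2"
  have c: "2 * c = s - 1" using two by (simp add: c_def)
  have "4 * (c^2 + c) = (2*c)^2 + 2 * (2*c)" by (simp add: algebra_simps power2_eq_square)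
  also have "\<dots> = s^2 - 1" unfolding c by (simp add: algebra_simps power2_eq_square)
  also have "\<dots> = 4 * 1" using s by simp
  finally have "c^2 + c = 1" using four by (metis mult_left_cancel)
  then show ?thesis by (rule that)
qed

lemma mod_ring_power_card_minus_1:
  fixes x :: "'a::prime_card mod_ring"
  assumes "x \<noteq> 0"
  shows "x ^ (CARD('a) - 1) = 1"
proof -
  have "Suc (CARD('a) - 1) = CARD('a)" using prime_gt_0_nat[OF prime_card[where 'a='a]] by simp
  then have "x * x ^ (CARD('a) - 1) = x" using fermat_theorem_mod_ring[of x] by (metis power_Suc)
  then show ?thesis using assms by simp
qed

lemma mod_ring_root_of_unity_eq_1:
  fixes z :: "'a::prime_card mod_ring"
  assumes "z ^ n = 1" "0 < n" "coprime n (CARD('a) - 1)"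
  shows "z = 1"
proof -
  have "z \<noteq> 0" using assms(1,2) by (auto simp: power_0_left)
  then have fermat: "z ^ (CARD('a) - 1) = 1" by (rule mod_ring_power_card_minus_1)
  obtain u v where "n * u = (CARD('a) - 1) * v + 1"
    using bezout_nat[of n "CARD('a) - 1"] assms(2,3) by auto
  then have "z ^ (n * u) = z ^ ((CARD('a) - 1) * v) * z" by (simp add: power_add)
  then show ?thesis using fermat by (simp add: power_mult assms(1))
qed

lemma mod_ring_exists_root_of_unity_neq_1:
  assumes "n dvd CARD('a::prime_card) - 1" "1 < n"
  shows "\<exists>z :: 'a mod_ring. z ^ n = 1 \<and> z \<noteq> 1"
proof -
  obtain m where m: "CARD('a) - 1 = n * m" using assms(1) by (elim dvdE)
  have "2 \<le> CARD('a)" using prime_ge_2_nat[OF prime_card[where 'a='a]] .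
  then have m1: "1 \<le> m" using m by (cases m) auto
  define p :: "'a mod_ring poly" where "p = monom 1 m + [:-1:]"
  have "degree p = m" unfolding p_def using m1
    by (subst degree_add_eq_left) (simp_all add: degree_monom_eq)
  then have "p \<noteq> 0" using m1 by auto
  then have "card {x. poly p x = 0} \<le> m" using card_poly_roots_bound \<open>degree p = m\<close> by metis
  moreover have "card (UNIV - {0 :: 'a mod_ring}) = n * m" using m by (simp add: card_Diff_singleton)
  moreover have "m < n * m" using m1 assms(2) by simp
  ultimately have "\<not> UNIV - {0} \<subseteq> {x. poly p x = 0}"
  proof (intro notI)
    assume "UNIV - {0} \<subseteq> {x. poly p x = 0}"
    then have "card (UNIV - {0 :: 'a mod_ring}) \<le> card {x. poly p x = 0}"
      by (rule card_mono[OF poly_roots_finite[OF \<open>p \<noteq> 0\<close>]])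
    moreover assume "card {x. poly p x = 0} \<le> m" "card (UNIV - {0 :: 'a mod_ring}) = n * m" "m < n * m"
    ultimately show False by linarith
  qed
  then obtain x :: "'a mod_ring" where "x \<noteq> 0" "poly p x \<noteq> 0" by blast
  have "x ^ m \<noteq> 1" using \<open>poly p x \<noteq> 0\<close> by (simp add: p_def poly_monom)
  moreover have "(x ^ m) ^ n = 1"
    using mod_ring_power_card_minus_1[OF \<open>x \<noteq> 0\<close>, unfolded m] by (metis power_mult mult.commute)
  ultimately show ?thesis by blast
qed

lemma is_square_golden_disc_of_cyclotomic5_root:
  fixes c z :: "'a::prime_card mod_ring"
  assumes l2: "2 < CARD('a)" and five: "(5::'a mod_ring) \<noteq> 0"
    and z: "z^4 + z^3 + z^2 + z + 1 = 0" and c: "c^2 + c = 1"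
  shows "is_square (c^2 - 4)"
proof -
  define d where "d = z + z^4"
  have d: "d^2 + d = 1" "is_square (d^2 - 4)"
    using golden_of_cyclotomic5[OF z] unfolding d_def by auto
  have disc_neq_0: "e^2 - 4 \<noteq> 0" if "e^2 + e = 1" for e :: "'a mod_ring"
    using golden_identities(2)[OF that] five by auto
  from golden_roots_cases[OF c d(1)] show ?thesis
  proof
    assume "c = d"
    with d show ?thesis by simp
  next
    assume "c = -1 - d"
    then have "is_square ((d^2 - 4) * (c^2 - 4))"
      using golden_identities(4)[OF d(1)] by simp
    then show ?thesis
      using is_square_mult_iff_mod_ring[OF l2 disc_neq_0[OF d(1)] disc_neq_0[OF c]] d(2) by simp
  qed
qed

lemma is_square_golden_disc_iff:
  fixes c :: "'a::prime_card mod_ring"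
  assumes l5: "CARD('a) mod 5 \<in> {1, 4}" and c: "c^2 + c = 1"
  shows "is_square (c^2 - 4) \<longleftrightarrow> CARD('a) mod 5 = 1"
proof
  have two: "(2::'a mod_ring) \<noteq> 0" and five: "(5::'a mod_ring) \<noteq> 0"
    using mod_ring_small_numerals_neq_0[OF l5] by simp_all
  assume "is_square (c^2 - 4)"
  then obtain z :: "'a mod_ring" where "z^4 + z^3 + z^2 + z + 1 = 0"
    using cyclotomic5_root_of_golden_disc_square[OF two c] by blast
  then have "z^5 = 1 \<and> z \<noteq> 1" by (rule iffD1[OF cyclotomic5_iff[OF five]])
  then have "\<not> coprime 5 (CARD('a) - 1)" using mod_ring_root_of_unity_eq_1[of z 5] by auto
  then have "5 dvd CARD('a) - 1" using prime_imp_coprime[of "5::nat"] by auto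
  moreover have "CARD('a) mod 5 = 1 \<or> CARD('a) mod 5 = 4" using l5 by simp
  ultimately show "CARD('a) mod 5 = 1" by presburger
next
  have five: "(5::'a mod_ring) \<noteq> 0" using mod_ring_small_numerals_neq_0[OF l5] by simp
  assume "CARD('a) mod 5 = 1"
  then have "5 dvd CARD('a) - 1" by presburger
  then obtain z :: "'a mod_ring" where "z ^ 5 = 1" "z \<noteq> 1"
    using mod_ring_exists_root_of_unity_neq_1 by force
  then have "z^4 + z^3 + z^2 + z + 1 = 0" by (intro iffD2[OF cyclotomic5_iff[OF five]] conjI)
  then show "is_square (c^2 - 4)"
    by (rule is_square_golden_disc_of_cyclotomic5_root[OF card_gt_2_of_mod5[OF l5] five _ c])
qed

lemma f0_disc_square_iff:
  fixes c :: "'a::prime_card mod_ring"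
  assumes l5: "CARD('a) mod 5 \<in> {1, 4}" and nsq: "\<not> is_square (-3 :: 'a mod_ring)"
    and c: "c^2 + c = 1"
  shows "(4*(2 + c))^2 + 4 \<noteq> 0" "is_square ((4*(2 + c))^2 + 4) \<longleftrightarrow> CARD('a) mod 5 = 4"
proof -
  let ?D = "(4*(2 + c))^2 + 4" and ?\<delta> = "c^2 - 4"
  have l2: "2 < CARD('a)" using card_gt_2_of_mod5[OF l5] .
  have three: "(3::'a mod_ring) \<noteq> 0" and five: "(5::'a mod_ring) \<noteq> 0"
    and six: "(6::'a mod_ring) \<noteq> 0"
    using mod_ring_small_numerals_neq_0[OF l5] by simp_all
  have \<delta>: "?\<delta> \<noteq> 0" using golden_identities(2)[OF c] five by auto
  have "2*c + 1 \<noteq> 0" using golden_identities(1)[OF c] five by (metis power_zero_numeral)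
  moreover have "c + 2 \<noteq> 0"
    using golden_identities(3)[OF c] by (metis mult_eq_0_iff neg_equal_0_iff_equal zero_neq_one)
  ultimately have w: "6 * (2*c + 1) * (c + 2) \<noteq> 0" using six by (metis mult_eq_0_iff)
  have eq: "?D * (-3 * ?\<delta>) = (6 * (2*c + 1) * (c + 2))^2"
    by (simp add: algebra_simps power2_eq_square golden_reduce[OF c])
  then have D: "?D \<noteq> 0" and "-3 * ?\<delta> \<noteq> 0" using w by auto
  then show "?D \<noteq> 0" by blast
  have "is_square ?D \<longleftrightarrow> is_square (-3 * ?\<delta>)"
    using is_square_mult_iff_mod_ring[OF l2 D \<open>-3 * ?\<delta> \<noteq> 0\<close>] eq by auto
  also have "\<dots> \<longleftrightarrow> (is_square (-3 :: 'a mod_ring) \<longleftrightarrow> is_square ?\<delta>)"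
    using is_square_mult_iff_mod_ring[OF l2, of "-3" ?\<delta>] three \<delta> by simp
  also have "\<dots> \<longleftrightarrow> CARD('a) mod 5 = 4"
    using nsq is_square_golden_disc_iff[OF l5 c] l5 by auto
  finally show "is_square ?D \<longleftrightarrow> CARD('a) mod 5 = 4" .
qed

lemma f1728_disc_square_iff:
  fixes c :: "'a::prime_card mod_ring"
  assumes l5: "CARD('a) mod 5 \<in> {1, 4}" and nsq: "\<not> is_square (-4 :: 'a mod_ring)"
    and c: "c^2 + c = 1"
  shows "(2*(5 + c))^2 + 4 \<noteq> 0" "is_square ((2*(5 + c))^2 + 4) \<longleftrightarrow> CARD('a) mod 5 = 4"
proof -
  let ?D = "(2*(5 + c))^2 + 4" and ?\<delta> = "c^2 - 4"
  have l2: "2 < CARD('a)" using card_gt_2_of_mod5[OF l5] .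
  have three: "(3::'a mod_ring) \<noteq> 0" and four: "(4::'a mod_ring) \<noteq> 0"
    and five: "(5::'a mod_ring) \<noteq> 0"
    using mod_ring_small_numerals_neq_0[OF l5] by simp_all
  have \<delta>: "?\<delta> \<noteq> 0" using golden_identities(2)[OF c] five by auto
  have eq: "?D = 3^2 * (-4 * ?\<delta>)"
    by (simp add: algebra_simps power2_eq_square golden_reduce[OF c])
  have "-4 * ?\<delta> \<noteq> 0" using four \<delta> by (metis mult_eq_0_iff neg_equal_0_iff_equal)
  then show "?D \<noteq> 0" unfolding eq using three by (metis mult_eq_0_iff power_not_zero)
  have "is_square ?D \<longleftrightarrow> is_square (-4 * ?\<delta>)"
    unfolding eq by (intro is_nth_power_mult_cancel_left is_nth_power_nth_power power_not_zero three)
  also have "\<dots> \<longleftrightarrow> (is_square (-4 :: 'a mod_ring) \<longleftrightarrow> is_square ?\<delta>)"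
    using is_square_mult_iff_mod_ring[OF l2, of "-4" ?\<delta>] four \<delta> by simp
  also have "\<dots> \<longleftrightarrow> CARD('a) mod 5 = 4"
    using nsq is_square_golden_disc_iff[OF l5 c] l5 by auto
  finally show "is_square ?D \<longleftrightarrow> CARD('a) mod 5 = 4" .
qed

lemma prod_quadratics_factorization_type:
  fixes a b :: "'a::prime_card mod_ring"
  assumes l5: "CARD('a) mod 5 \<in> {1, 4}" and "a \<noteq> b"
    and "a^2 + 4 \<noteq> 0" "is_square (a^2 + 4) \<longleftrightarrow> CARD('a) mod 5 = 4"
    and "b^2 + 4 \<noteq> 0" "is_square (b^2 + 4) \<longleftrightarrow> CARD('a) mod 5 = 4"
  shows "CARD('a) mod 5 = 4 \<Longrightarrow> \<exists>R. card R = 4 \<and> [:-1, a, 1:] * [:-1, b, 1:] = (\<Prod>r\<in>R. [:-r, 1:])"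
    and "CARD('a) mod 5 = 1 \<Longrightarrow> irreducible [:-1, a, 1:] \<and> irreducible [:-1, b, 1:]"
proof -
  have two: "(2::'a mod_ring) \<noteq> 0" using mod_ring_small_numerals_neq_0[OF l5] by simp
  show "CARD('a) mod 5 = 4 \<Longrightarrow> \<exists>R. card R = 4 \<and> [:-1, a, 1:] * [:-1, b, 1:] = (\<Prod>r\<in>R. [:-r, 1:])"
    using assms by (intro prod_quadratics_splits[OF two]) auto
  show "CARD('a) mod 5 = 1 \<Longrightarrow> irreducible [:-1, a, 1:] \<and> irreducible [:-1, b, 1:]"
    using assms by (intro conjI irreducible_monic_quadratic) auto
qed

lemma red_f0_eq:
  assumes "a + b = 12" "a * b = 16"
  shows "(red f0 :: 'a::prime_card mod_ring poly) = [:-1, a, 1:] * [:-1, b, 1:]"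
  unfolding prod_quadratics_coeffs using assms by (simp add: red_def f0_def)

lemma red_f1728_eq:
  assumes "a + b = 18" "a * b = 76"
  shows "(red f1728 :: 'a::prime_card mod_ring poly) = [:-1, a, 1:] * [:-1, b, 1:]"
  unfolding prod_quadratics_coeffs using assms by (simp add: red_def f1728_def)

lemma red_f0_factorization_type:
  assumes l5: "CARD('a::prime_card) mod 5 \<in> {1, 4}" and nsq: "\<not> is_square (-3 :: 'a mod_ring)"
  shows "CARD('a) mod 5 = 4 \<Longrightarrow>
      \<exists>R :: 'a mod_ring set. card R = 4 \<and> red f0 = (\<Prod>r\<in>R. [:-r, 1:])"
    and "CARD('a) mod 5 = 1 \<Longrightarrow> \<exists>a b :: 'a mod_ring. red f0 = [:-1, a, 1:] * [:-1, b, 1:]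
      \<and> irreducible [:-1, a, 1:] \<and> irreducible [:-1, b, 1:]"
proof -
  obtain c :: "'a mod_ring" where c: "c^2 + c = 1" using exists_golden_mod_ring[OF l5] .
  define c' where "c' = -1 - c"
  have c': "c'^2 + c' = 1" using c unfolding c'_def by (simp add: algebra_simps power2_eq_square)
  have four: "(4::'a mod_ring) \<noteq> 0" and five: "(5::'a mod_ring) \<noteq> 0"
    using mod_ring_small_numerals_neq_0[OF l5] by simp_all
  have "c - c' = 2 * c + 1" unfolding c'_def by (simp add: algebra_simps eval_nat_numeral)
  then have "c \<noteq> c'" using golden_identities(1)[OF c] five by auto
  then have ab: "4*(2 + c) \<noteq> 4*(2 + c')" using four by simp
  have f: "red f0 = [:-1, 4*(2 + c), 1:] * [:-1, 4*(2 + c'), 1:]"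
    by (rule red_f0_eq) (simp_all add: c'_def algebra_simps golden_reduce[OF c])
  note type = prod_quadratics_factorization_type[OF l5 ab f0_disc_square_iff[OF l5 nsq c]
      f0_disc_square_iff[OF l5 nsq c']]
  show "CARD('a) mod 5 = 4 \<Longrightarrow> \<exists>R :: 'a mod_ring set. card R = 4 \<and> red f0 = (\<Prod>r\<in>R. [:-r, 1:])"
    by (fact type(1)[folded f])
  show "CARD('a) mod 5 = 1 \<Longrightarrow> \<exists>a b :: 'a mod_ring. red f0 = [:-1, a, 1:] * [:-1, b, 1:]
      \<and> irreducible [:-1, a, 1:] \<and> irreducible [:-1, b, 1:]"
    using type(2) f by blast
qed

lemma red_f1728_factorization_type:
  assumes l5: "CARD('a::prime_card) mod 5 \<in> {1, 4}" and nsq: "\<not> is_square (-4 :: 'a mod_ring)"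
  shows "CARD('a) mod 5 = 4 \<Longrightarrow>
      \<exists>R :: 'a mod_ring set. card R = 4 \<and> red f1728 = (\<Prod>r\<in>R. [:-r, 1:])"
    and "CARD('a) mod 5 = 1 \<Longrightarrow> \<exists>a b :: 'a mod_ring. red f1728 = [:-1, a, 1:] * [:-1, b, 1:]
      \<and> irreducible [:-1, a, 1:] \<and> irreducible [:-1, b, 1:]"
proof -
  obtain c :: "'a mod_ring" where c: "c^2 + c = 1" using exists_golden_mod_ring[OF l5] .
  define c' where "c' = -1 - c"
  have c': "c'^2 + c' = 1" using c unfolding c'_def by (simp add: algebra_simps power2_eq_square)
  have two: "(2::'a mod_ring) \<noteq> 0" and five: "(5::'a mod_ring) \<noteq> 0"
    using mod_ring_small_numerals_neq_0[OF l5] by simp_all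
  have "c - c' = 2 * c + 1" unfolding c'_def by (simp add: algebra_simps eval_nat_numeral)
  then have "c \<noteq> c'" using golden_identities(1)[OF c] five by auto
  then have ab: "2*(5 + c) \<noteq> 2*(5 + c')" using two by simp
  have f: "red f1728 = [:-1, 2*(5 + c), 1:] * [:-1, 2*(5 + c'), 1:]"
    by (rule red_f1728_eq) (simp_all add: c'_def algebra_simps golden_reduce[OF c])
  note type = prod_quadratics_factorization_type[OF l5 ab f1728_disc_square_iff[OF l5 nsq c]
      f1728_disc_square_iff[OF l5 nsq c']]
  show "CARD('a) mod 5 = 4 \<Longrightarrow> \<exists>R :: 'a mod_ring set. card R = 4 \<and> red f1728 = (\<Prod>r\<in>R. [:-r, 1:])"
    by (fact type(1)[folded f])
  show "CARD('a) mod 5 = 1 \<Longrightarrow> \<exists>a b :: 'a mod_ring. red f1728 = [:-1, a, 1:] * [:-1, b, 1:]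
      \<and> irreducible [:-1, a, 1:] \<and> irreducible [:-1, b, 1:]"
    using type(2) f by blast
qed

theorem proposition2p1:
  fixes l :: nat
  assumes "prime l" and "CARD('p::prime_card) = l"
  shows
   "(l mod 5 = 4 \<and> Legendre (-3) (int l) = -1 \<longrightarrow>
      (\<exists>R :: 'p mod_ring set. card R = 4 \<and> (red f0 :: 'p mod_ring poly) = (\<Prod>r\<in>R. [:-r, 1:])))
    \<and> (l mod 5 = 4 \<and> Legendre (-4) (int l) = -1 \<longrightarrow>
      (\<exists>R :: 'p mod_ring set. card R = 4 \<and> (red f1728 :: 'p mod_ring poly) = (\<Prod>r\<in>R. [:-r, 1:])))
    \<and> (l mod 5 = 1 \<and> Legendre (-3) (int l) = -1 \<longrightarrow>
      (\<exists>a b :: 'p mod_ring. (red f0 :: 'p mod_ring poly) = [:-1, a, 1:] * [:-1, b, 1:]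
          \<and> irreducible [:-1, a, 1:] \<and> irreducible [:-1, b, 1:]))
    \<and> (l mod 5 = 1 \<and> Legendre (-4) (int l) = -1 \<longrightarrow>
      (\<exists>a b :: 'p mod_ring. (red f1728 :: 'p mod_ring poly) = [:-1, a, 1:] * [:-1, b, 1:]
          \<and> irreducible [:-1, a, 1:] \<and> irreducible [:-1, b, 1:]))"
proof -
  have nsq: "\<not> is_square (of_int a :: 'p mod_ring)" if "Legendre a (int l) = -1" for a
    using not_square_of_Legendre_eq_minus_one[where 'a='p] that assms(2) by simp
  from nsq[of "-3"] nsq[of "-4"]
    red_f0_factorization_type[where 'a='p] red_f1728_factorization_type[where 'a='p]
  show ?thesis using assms(2) by auto
qed

end
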